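(* Let $Y$ be a topological semigroup and $X$ a subsemigroup of $Y$ (with the subspace topology). Suppose there is a continuous homomorphism $h:X\to E$ into a chain-finite semilattice $E$ endowed with the discrete topology such that for every $e\in E$ the set $h^{-1}(e)$ is closed in $Y$. Then $X$ is closed in $Y$.
   Context: A topological semigroup is a topological space with a continuous associative binary operation (no separation axioms assumed here). A semilattice is a commutative semigroup of idempotents. A subset $C$ of a semigroup is a chain if $xy\in\{x,y\}$ for all $x,y\in C$; a semigroup is chain-finite if it has no infinite chain. *)

theory Defs
  imports "HOL-Analysis.Analysis"
begin

definition topological_semigroup :: "'a topology \<Rightarrow> ('a \<Rightarrow> 'a \<Rightarrow> 'a) \<Rightarrow> bool" where
  "topological_semigroup T m \<longleftrightarrow>
     (\<forall>x\<in>topspace T. \<forall>y\<in>topspace T. m x y \<in> topspace T) \<and>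
     (\<forall>x\<in>topspace T. \<forall>y\<in>topspace T. \<forall>z\<in>topspace T. m (m x y) z = m x (m y z)) \<and>
     continuous_map (prod_topology T T) T (\<lambda>(x, y). m x y)"

definition subsemigroup :: "'a set \<Rightarrow> 'a set \<Rightarrow> ('a \<Rightarrow> 'a \<Rightarrow> 'a) \<Rightarrow> bool" where
  "subsemigroup X S m \<longleftrightarrow> X \<subseteq> S \<and> (\<forall>x\<in>X. \<forall>y\<in>X. m x y \<in> X)"

definition semilattice_on :: "'b set \<Rightarrow> ('b \<Rightarrow> 'b \<Rightarrow> 'b) \<Rightarrow> bool" where
  "semilattice_on E p \<longleftrightarrow>
     (\<forall>x\<in>E. \<forall>y\<in>E. p x y \<in> E) \<and>
     (\<forall>x\<in>E. \<forall>y\<in>E. \<forall>z\<in>E. p (p x y) z = p x (p y z)) \<and>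
     (\<forall>x\<in>E. \<forall>y\<in>E. p x y = p y x) \<and>
     (\<forall>x\<in>E. p x x = x)"

definition is_chain :: "('b \<Rightarrow> 'b \<Rightarrow> 'b) \<Rightarrow> 'b set \<Rightarrow> bool" where
  "is_chain p C \<longleftrightarrow> (\<forall>x\<in>C. \<forall>y\<in>C. p x y \<in> {x, y})"

definition chain_finite :: "'b set \<Rightarrow> ('b \<Rightarrow> 'b \<Rightarrow> 'b) \<Rightarrow> bool" where
  "chain_finite E p \<longleftrightarrow> (\<forall>C. C \<subseteq> E \<and> is_chain p C \<longrightarrow> finite C)"

definition semigroup_hom :: "('a \<Rightarrow> 'b) \<Rightarrow> 'a set \<Rightarrow> ('a \<Rightarrow> 'a \<Rightarrow> 'a) \<Rightarrow> 'b set \<Rightarrow> ('b \<Rightarrow> 'b \<Rightarrow> 'b) \<Rightarrow> bool" where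
  "semigroup_hom h X m E p \<longleftrightarrow> h ` X \<subseteq> E \<and> (\<forall>x\<in>X. \<forall>y\<in>X. h (m x y) = p (h x) (h y))"

end

theory Submission
  imports Defs
begin

(*
  Order E by a \<le> b iff p a b = a; chain-finiteness makes this order and its dual well-founded.
  Write products in the semigroup by juxtaposition, U e = {x \<in> X. e \<le> h x} and
  F e = {x \<in> X. h x = e}. For y in the closure of X choose e maximal such that y is in the
  closure of U e; such e exist because h ` X has a least element.
  Downward induction on b \<in> h ` X with e \<le> b shows that p (h x) b = e for all x \<in> U e
  near y: if e < b, maximality of e keeps U b away from y, so p (h x) b < b near y, and the
  induction hypothesis with continuity of the multiplication puts y y a (where h a = b) into the
  closed set F e; as F e is open in X, x x a lies in F e for x \<in> X near y, i.e. p (h x) b = e.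
  The same argument without a puts y y into F e, whence h x = h (x x) = e for x \<in> U e near y,
  so y lies in the closed set F e \<subseteq> X.
*)

definition semilattice_less :: "'b set \<Rightarrow> ('b \<Rightarrow> 'b \<Rightarrow> 'b) \<Rightarrow> ('b \<times> 'b) set" where
  "semilattice_less E p = {(a, b). a \<in> E \<and> b \<in> E \<and> p a b = a \<and> a \<noteq> b}"

lemma trans_semilattice_less:
  assumes "semilattice_on E p"
  shows "trans (semilattice_less E p)"
proof (rule transI)
  fix a b c
  assume "(a, b) \<in> semilattice_less E p" "(b, c) \<in> semilattice_less E p"
  then have E: "a \<in> E" "b \<in> E" "c \<in> E" and ab: "p a b = a" "a \<noteq> b" and bc: "p b c = b" "b \<noteq> c"
    by (auto simp: semilattice_less_def)
  have "p a c = a"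
    using assms E ab bc unfolding semilattice_on_def by metis
  moreover have "a \<noteq> c"
    using assms E ab bc unfolding semilattice_on_def by metis
  ultimately show "(a, c) \<in> semilattice_less E p"
    using E by (simp add: semilattice_less_def)
qed

lemma trans_down_chain:
  fixes f :: "nat \<Rightarrow> 'a"
  assumes "trans R" and chain: "\<And>i. (f (Suc i), f i) \<in> R" and "i < j"
  shows "(f j, f i) \<in> R"
  using \<open>i < j\<close>
proof (induction j)
  case (Suc j)
  then show ?case
    using chain[of j] \<open>trans R\<close> by (metis less_Suc_eq transD)
qed simp

lemma chain_finite_no_strict_sequence:
  fixes f :: "nat \<Rightarrow> 'b"
  assumes sl: "semilattice_on E p" and cf: "chain_finite E p"
    and strict: "\<And>i j. i < j \<Longrightarrow> (f i, f j) \<in> semilattice_less E p \<union> (semilattice_less E p)\<inverse>"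
  shows False
proof -
  have comparable: "f i \<in> E \<and> f j \<in> E \<and> f i \<noteq> f j \<and> p (f i) (f j) \<in> {f i, f j}" if "i < j" for i j
    using strict[OF that] sl unfolding semilattice_less_def semilattice_on_def by auto
  have "range f \<subseteq> E"
    using comparable[OF lessI] by blast
  moreover have "is_chain p (range f)"
    unfolding is_chain_def
  proof (intro ballI)
    fix x y
    assume "x \<in> range f" "y \<in> range f"
    then obtain i j where "x = f i" "y = f j" by blast
    then show "p x y \<in> {x, y}"
      using comparable[of i j] comparable[of j i] sl \<open>range f \<subseteq> E\<close>
      unfolding semilattice_on_def by (cases i j rule: linorder_cases) (auto simp: image_subset_iff)
  qed
  ultimately have "finite (range f)"
    using cf by (simp add: chain_finite_def)
  moreover have "inj f"
    by (rule injI) (metis comparable linorder_neqE_nat)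
  ultimately show False
    using range_inj_infinite by blast
qed

lemma wf_semilattice_less:
  assumes "semilattice_on E p" and "chain_finite E p"
  shows "wf (semilattice_less E p)" and "wf ((semilattice_less E p)\<inverse>)"
proof -
  have trans: "trans (semilattice_less E p)" "trans ((semilattice_less E p)\<inverse>)"
    using trans_semilattice_less[OF assms(1)] by simp_all
  show "wf (semilattice_less E p)"
    unfolding wf_iff_no_infinite_down_chain
  proof
    assume "\<exists>f. \<forall>i. (f (Suc i), f i) \<in> semilattice_less E p"
    then obtain f where "\<And>i. (f (Suc i), f i) \<in> semilattice_less E p" by blast
    then show False
      using chain_finite_no_strict_sequence[OF assms] trans_down_chain[OF trans(1)] by blast
  qed
  show "wf ((semilattice_less E p)\<inverse>)"
    unfolding wf_iff_no_infinite_down_chain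
  proof
    assume "\<exists>f. \<forall>i. (f (Suc i), f i) \<in> (semilattice_less E p)\<inverse>"
    then obtain f where "\<And>i. (f (Suc i), f i) \<in> (semilattice_less E p)\<inverse>" by blast
    then show False
      using chain_finite_no_strict_sequence[OF assms] trans_down_chain[OF trans(2)] by blast
  qed
qed

lemma semilattice_least_element:
  assumes sl: "semilattice_on E p" and wf: "wf (semilattice_less E p)"
    and "S \<subseteq> E" "S \<noteq> {}" and closed: "\<And>a b. a \<in> S \<Longrightarrow> b \<in> S \<Longrightarrow> p a b \<in> S"
  shows "\<exists>c\<in>S. \<forall>s\<in>S. p c s = c"
proof -
  obtain c where c: "c \<in> S" and minimal: "\<And>a. (a, c) \<in> semilattice_less E p \<Longrightarrow> a \<notin> S"
    using wf_eq_minimal[THEN iffD1, OF wf] \<open>S \<noteq> {}\<close> by blast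
  have "p c s = c" if s: "s \<in> S" for s
  proof (rule ccontr)
    assume "p c s \<noteq> c"
    moreover have "p (p c s) c = p c s"
      using sl \<open>S \<subseteq> E\<close> c s unfolding semilattice_on_def by (metis subsetD)
    ultimately have "(p c s, c) \<in> semilattice_less E p"
      using sl \<open>S \<subseteq> E\<close> c s closed unfolding semilattice_less_def by blast
    then show False
      using minimal closed[OF c s] by blast
  qed
  then show ?thesis
    using c by blast
qed

abbreviation nhdsin_within :: "'a topology \<Rightarrow> 'a \<Rightarrow> 'a set \<Rightarrow> 'a filter" where
  "nhdsin_within T y S \<equiv> inf (nhdsin T y) (principal S)"

lemma eventually_nhdsin_continuous_map:
  assumes "continuous_map X Y g" "openin Y V" "a \<in> topspace X" "g a \<in> V"
  shows "eventually (\<lambda>x. g x \<in> V) (nhdsin X a)"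
  unfolding eventually_nhdsin
  using openin_continuous_map_preimage[OF assms(1,2)] assms(3,4) by blast

lemma in_closure_of_eventually:
  assumes "y \<in> T closure_of S" "eventually P (nhdsin_within T y S)"
  shows "\<exists>x\<in>S. P x"
proof -
  have "y \<in> topspace T"
    using assms(1) in_closure_of by fast
  then obtain W where "openin T W" "y \<in> W" "\<forall>x\<in>W. x \<in> S \<longrightarrow> P x"
    using assms(2) \<open>y \<in> topspace T\<close> unfolding eventually_inf_principal eventually_nhdsin by blast
  then show ?thesis
    using assms(1) unfolding in_closure_of by blast
qed

lemma in_closure_of_if_eventually_in:
  assumes "y \<in> T closure_of S" "eventually (\<lambda>x. x \<in> A) (nhdsin_within T y S)"
  shows "y \<in> T closure_of A"
  unfolding in_closure_of
proof (intro conjI allI impI)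
  show "y \<in> topspace T"
    using assms(1) in_closure_of by fast
  fix N
  assume "y \<in> N \<and> openin T N"
  then have "eventually (\<lambda>x. x \<in> N) (nhdsin_within T y S)"
    unfolding eventually_inf_principal eventually_nhdsin by blast
  then show "\<exists>x. x \<in> A \<and> x \<in> N"
    using in_closure_of_eventually[OF assms(1) eventually_conj[OF assms(2)]] by blast
qed

lemma diagonal_in_closure_of:
  assumes f_continuous: "continuous_map (prod_topology T T) U (\<lambda>(u, v). f u v)" and y: "y \<in> T closure_of S"
    and ev: "eventually (\<lambda>x. eventually (\<lambda>x'. f x' x \<in> A) (nhdsin_within T y S))
               (nhdsin_within T y S)"
  shows "f y y \<in> U closure_of A"
  unfolding in_closure_of
proof (intro conjI allI impI)
  have yT: "y \<in> topspace T"
    using y in_closure_of by fast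
  then show "f y y \<in> topspace U"
    using continuous_map_image_subset_topspace[OF f_continuous] by (simp add: image_subset_iff)
  fix N
  assume N: "f y y \<in> N \<and> openin U N"
  define P where "P = {z \<in> topspace (prod_topology T T). (\<lambda>(u, v). f u v) z \<in> N}"
  have "openin (prod_topology T T) P"
    using openin_continuous_map_preimage[OF f_continuous] N by (simp add: P_def)
  moreover have "(y, y) \<in> P"
    using N yT by (simp add: P_def)
  ultimately obtain W1 W2 where W: "openin T W1" "openin T W2" "y \<in> W1" "y \<in> W2"
      and W12: "W1 \<times> W2 \<subseteq> P"
    using openin_prod_topology_alt[THEN iffD1, rule_format] by metis
  have near: "eventually (\<lambda>x. x \<in> W) (nhdsin_within T y S)"
    if "openin T W" "y \<in> W" for W
    using that unfolding eventually_inf_principal eventually_nhdsin by blast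
  obtain x where x: "x \<in> W2" and "eventually (\<lambda>x'. f x' x \<in> A) (nhdsin_within T y S)"
    using in_closure_of_eventually[OF y eventually_conj[OF near[OF W(2,4)] ev]] by blast
  then obtain x' where "x' \<in> W1" "f x' x \<in> A"
    using in_closure_of_eventually[OF y eventually_conj[OF near[OF W(1,3)]]] by blast
  moreover have "f x' x \<in> N"
    using subsetD[OF W12, of "(x', x)"] \<open>x' \<in> W1\<close> x by (simp add: P_def)
  ultimately show "\<exists>z. z \<in> A \<and> z \<in> N"
    by blast
qed

locale fibred_subsemigroup =
  fixes T :: "'a topology" and m :: "'a \<Rightarrow> 'a \<Rightarrow> 'a" and X :: "'a set"
    and E :: "'b set" and p :: "'b \<Rightarrow> 'b \<Rightarrow> 'b" and h :: "'a \<Rightarrow> 'b"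
  assumes semigroup: "topological_semigroup T m"
    and subsemigroup: "subsemigroup X (topspace T) m"
    and semilattice: "semilattice_on E p"
    and chain_finite: "chain_finite E p"
    and hom: "semigroup_hom h X m E p"
    and h_continuous: "continuous_map (subtopology T X) (discrete_topology E) h"
    and fibres_closed: "\<forall>e\<in>E. closedin T {x \<in> X. h x = e}"
begin

definition fibre :: "'b \<Rightarrow> 'a set" where
  "fibre e = {x \<in> X. h x = e}"

definition upper :: "'b \<Rightarrow> 'a set" where
  "upper e = {x \<in> X. p e (h x) = e}"

lemma X_subset: "X \<subseteq> topspace T"
  and mult_closed: "x \<in> X \<Longrightarrow> x' \<in> X \<Longrightarrow> m x x' \<in> X"
  using subsemigroup by (auto simp: subsemigroup_def)

lemma h_in_E: "x \<in> X \<Longrightarrow> h x \<in> E"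
  and h_mult: "x \<in> X \<Longrightarrow> x' \<in> X \<Longrightarrow> h (m x x') = p (h x) (h x')"
  using hom by (auto simp: semigroup_hom_def)

lemma p_closed: "a \<in> E \<Longrightarrow> b \<in> E \<Longrightarrow> p a b \<in> E"
  and p_assoc: "a \<in> E \<Longrightarrow> b \<in> E \<Longrightarrow> c \<in> E \<Longrightarrow> p (p a b) c = p a (p b c)"
  and p_commute: "a \<in> E \<Longrightarrow> b \<in> E \<Longrightarrow> p a b = p b a"
  and p_idem: "a \<in> E \<Longrightarrow> p a a = a"
  using semilattice by (auto simp: semilattice_on_def)

lemma h_square: "x \<in> X \<Longrightarrow> h (m x x) = h x"
  by (simp add: h_mult h_in_E p_idem)

lemma continuous_map_mult: "continuous_map (prod_topology T T) T (\<lambda>(u, v). m u v)"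
  using semigroup by (simp add: topological_semigroup_def)

lemma continuous_map_mult_right:
  assumes "a \<in> topspace T"
  shows "continuous_map (prod_topology T T) T (\<lambda>(u, v). m (m u v) a)"
proof -
  have "continuous_map T T (\<lambda>z. m z a)"
    using continuous_map_compose[OF continuous_map_pairedI continuous_map_mult,
        of T id "\<lambda>_. a"] assms by (simp add: o_def)
  then show ?thesis
    using continuous_map_compose[OF continuous_map_mult] by (simp add: o_def case_prod_unfold)
qed

lemma fibre_closure: "e \<in> E \<Longrightarrow> T closure_of fibre e = fibre e"
  using fibres_closed by (simp add: fibre_def closure_of_eq)

lemma fibre_open:
  assumes "e \<in> E"
  obtains U where "openin T U" "fibre e = U \<inter> X"
proof -
  have "openin (discrete_topology E) {e}"
    using assms by simp
  then have "openin (subtopology T X) {x \<in> topspace (subtopology T X). h x \<in> {e}}"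
    by (rule openin_continuous_map_preimage[OF h_continuous])
  then show ?thesis
    using that X_subset unfolding openin_subtopology fibre_def by auto
qed

lemma eventually_fibre_diagonal:
  assumes "e \<in> E" and f_continuous: "continuous_map (prod_topology T T) T (\<lambda>(u, v). f u v)"
    and f_closed: "\<And>u v. u \<in> X \<Longrightarrow> v \<in> X \<Longrightarrow> f u v \<in> X"
    and y: "y \<in> T closure_of S" and "S \<subseteq> X"
    and ev: "eventually (\<lambda>x. eventually (\<lambda>x'. h (f x' x) = e) (nhdsin_within T y S))
               (nhdsin_within T y S)"
  shows "eventually (\<lambda>x. h (f x x) = e) (nhdsin_within T y S)"
proof -
  have in_S: "eventually (\<lambda>x. x \<in> S) (nhdsin_within T y S)"
    by (simp add: eventually_inf_principal)
  have "eventually (\<lambda>x. eventually (\<lambda>x'. f x' x \<in> fibre e) (nhdsin_within T y S))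
          (nhdsin_within T y S)"
    using eventually_conj[OF in_S ev]
  proof (rule eventually_mono)
    fix x
    assume x: "x \<in> S \<and> eventually (\<lambda>x'. h (f x' x) = e) (nhdsin_within T y S)"
    then have "eventually (\<lambda>x'. x' \<in> S \<and> h (f x' x) = e) (nhdsin_within T y S)"
      using eventually_conj[OF in_S] by blast
    then show "eventually (\<lambda>x'. f x' x \<in> fibre e) (nhdsin_within T y S)"
      by (rule eventually_mono) (use x \<open>S \<subseteq> X\<close> f_closed in \<open>auto simp: fibre_def\<close>)
  qed
  then have "f y y \<in> fibre e"
    using diagonal_in_closure_of[OF f_continuous y] fibre_closure[OF \<open>e \<in> E\<close>] by metis
  moreover obtain U where U: "openin T U" "fibre e = U \<inter> X"
    using fibre_open[OF \<open>e \<in> E\<close>] .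
  moreover have "continuous_map T T (\<lambda>x. f x x)"
    using continuous_map_compose[OF continuous_map_pairedI[OF continuous_map_id continuous_map_id]
        f_continuous] by (simp add: o_def)
  moreover have "y \<in> topspace T"
    using y in_closure_of by fast
  ultimately have "eventually (\<lambda>x. f x x \<in> U) (nhdsin T y)"
    using eventually_nhdsin_continuous_map by fastforce
  then show ?thesis
    using U \<open>S \<subseteq> X\<close> f_closed
    by (auto simp: eventually_inf_principal fibre_def elim!: eventually_mono)
qed

lemma eventually_in_upper: "eventually (\<lambda>x. x \<in> upper e) (nhdsin_within T y (upper e))"
  by (simp add: eventually_inf_principal)

lemma upper_subset: "upper e \<subseteq> X"
  by (auto simp: upper_def)

lemma meet_upper_less:
  assumes "e \<in> E" "b \<in> E" "p e b = e" "x \<in> upper e" "x \<notin> upper b"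
  shows "(p (h x) b, b) \<in> semilattice_less E p \<and> p e (p (h x) b) = e"
proof -
  have "x \<in> X" and ex: "p e (h x) = e" and "p b (h x) \<noteq> b"
    using assms(4,5) by (auto simp: upper_def)
  have "h x \<in> E"
    using h_in_E[OF \<open>x \<in> X\<close>] .
  have "p (h x) b \<noteq> b"
    using \<open>p b (h x) \<noteq> b\<close> p_commute[OF \<open>b \<in> E\<close> \<open>h x \<in> E\<close>] by simp
  moreover have "p (p (h x) b) b = p (h x) b"
    using p_assoc[OF \<open>h x \<in> E\<close> \<open>b \<in> E\<close> \<open>b \<in> E\<close>] p_idem[OF \<open>b \<in> E\<close>] by simp
  moreover have "p e (p (h x) b) = e"
    using p_assoc[OF \<open>e \<in> E\<close> \<open>h x \<in> E\<close> \<open>b \<in> E\<close>] ex \<open>p e b = e\<close> by simp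
  ultimately show ?thesis
    using \<open>b \<in> E\<close> p_closed[OF \<open>h x \<in> E\<close> \<open>b \<in> E\<close>] unfolding semilattice_less_def by auto
qed

lemma eventually_meet_eq_step:
  assumes y: "y \<in> T closure_of upper e" and "e \<in> E" and "a \<in> X"
    and iterated: "eventually (\<lambda>x. eventually (\<lambda>x'. p (h x') (p (h x) (h a)) = e)
                     (nhdsin_within T y (upper e))) (nhdsin_within T y (upper e))"
  shows "eventually (\<lambda>x. p (h x) (h a) = e) (nhdsin_within T y (upper e))"
proof -
  have "eventually (\<lambda>x. eventually (\<lambda>x'. h (m (m x' x) a) = e)
          (nhdsin_within T y (upper e))) (nhdsin_within T y (upper e))"
    using eventually_conj[OF eventually_in_upper iterated]
  proof (rule eventually_mono)
    fix x
    assume x: "x \<in> upper e \<and> eventually (\<lambda>x'. p (h x') (p (h x) (h a)) = e) (nhdsin_within T y (upper e))"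
    then have "eventually (\<lambda>x'. x' \<in> upper e \<and> p (h x') (p (h x) (h a)) = e)
                 (nhdsin_within T y (upper e))"
      using eventually_conj[OF eventually_in_upper] by blast
    then show "eventually (\<lambda>x'. h (m (m x' x) a) = e) (nhdsin_within T y (upper e))"
      by (rule eventually_mono)
        (use x \<open>a \<in> X\<close> in \<open>auto simp: upper_def h_mult mult_closed p_assoc h_in_E\<close>)
  qed
  moreover have "a \<in> topspace T"
    using \<open>a \<in> X\<close> X_subset by blast
  ultimately have "eventually (\<lambda>x. h (m (m x x) a) = e) (nhdsin_within T y (upper e))"
    using eventually_fibre_diagonal[OF \<open>e \<in> E\<close> continuous_map_mult_right _ y upper_subset]
      \<open>a \<in> X\<close> mult_closed by blast
  then have "eventually (\<lambda>x. x \<in> upper e \<and> h (m (m x x) a) = e) (nhdsin_within T y (upper e))"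
    using eventually_conj[OF eventually_in_upper] by blast
  then show ?thesis
    by (rule eventually_mono)
      (use \<open>a \<in> X\<close> in \<open>auto simp: upper_def h_mult mult_closed p_idem h_in_E\<close>)
qed

lemma eventually_meet_eq_maximal:
  assumes y: "y \<in> T closure_of upper e" and "e \<in> E"
    and maximal: "\<And>f. (e, f) \<in> semilattice_less E p \<Longrightarrow> y \<notin> T closure_of upper f"
  shows "b \<in> h ` X \<Longrightarrow> p e b = e \<Longrightarrow>
    eventually (\<lambda>x. p (h x) b = e) (nhdsin_within T y (upper e))"
proof (induction b rule: wf_induct_rule[OF wf_semilattice_less(1)[OF semilattice chain_finite]])
  case (1 b)
  obtain a where a: "a \<in> X" "h a = b"
    using "1.prems"(1) by blast
  have "b \<in> E"
    using a h_in_E by blast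
  have yT: "y \<in> topspace T"
    using y in_closure_of by fast
  show ?case
  proof (cases "b = e")
    case True
    show ?thesis
      using eventually_in_upper
      by (rule eventually_mono) (use True \<open>e \<in> E\<close> in \<open>auto simp: upper_def p_commute h_in_E\<close>)
  next
    case False
    then have "(e, b) \<in> semilattice_less E p"
      using \<open>e \<in> E\<close> \<open>b \<in> E\<close> "1.prems"(2) by (simp add: semilattice_less_def)
    then have "y \<notin> T closure_of upper b"
      by (rule maximal)
    then obtain W where W: "openin T W" "y \<in> W" and W_disjoint: "W \<inter> upper b = {}"
      using yT unfolding in_closure_of by blast
    have smaller: "(p (h x) b, b) \<in> semilattice_less E p \<and> p (h x) b \<in> h ` X \<and> p e (p (h x) b) = e"
      if x: "x \<in> upper e" "x \<in> W" for x
    proof -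
      have "x \<in> X"
        using x by (simp add: upper_def)
      moreover have "x \<notin> upper b"
        using x W_disjoint by blast
      moreover have "p (h x) b = h (m x a)"
        using h_mult[OF \<open>x \<in> X\<close> \<open>a \<in> X\<close>] a(2) by simp
      ultimately show ?thesis
        using meet_upper_less[OF \<open>e \<in> E\<close> \<open>b \<in> E\<close> "1.prems"(2) x(1)] mult_closed a by auto
    qed
    have "eventually (\<lambda>x. x \<in> upper e \<and> x \<in> W) (nhdsin_within T y (upper e))"
      using W unfolding eventually_inf_principal eventually_nhdsin upper_def by blast
    then have "eventually (\<lambda>x. eventually (\<lambda>x'. p (h x') (p (h x) b) = e)
                 (nhdsin_within T y (upper e))) (nhdsin_within T y (upper e))"
      by (rule eventually_mono) (use "1.IH" smaller in blast)
    then show ?thesis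
      using eventually_meet_eq_step[OF y \<open>e \<in> E\<close> \<open>a \<in> X\<close>] a(2) by simp
  qed
qed

lemma least_value_upper:
  assumes "X \<noteq> {}"
  obtains c where "c \<in> E" "upper c = X"
proof -
  have "p s t \<in> h ` X" if st: "s \<in> h ` X" "t \<in> h ` X" for s t
  proof -
    obtain x x' where "x \<in> X" "x' \<in> X" "s = h x" "t = h x'"
      using st by blast
    then have "p s t = h (m x x')"
      by (simp add: h_mult)
    then show ?thesis
      using mult_closed[OF \<open>x \<in> X\<close> \<open>x' \<in> X\<close>] by blast
  qed
  moreover have "h ` X \<subseteq> E"
    using h_in_E by blast
  ultimately obtain c where "c \<in> h ` X" and least: "\<forall>s \<in> h ` X. p c s = c"
    using semilattice_least_element[OF semilattice wf_semilattice_less(1)[OF semilattice chain_finite],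
        of "h ` X"] assms by blast
  moreover have "upper c = X"
    using least by (auto simp: upper_def)
  ultimately show ?thesis
    using that h_in_E by blast
qed

lemma maximal_upper_in_closure:
  assumes y: "y \<in> T closure_of X"
  obtains e where "e \<in> E" "y \<in> T closure_of upper e"
    and "\<And>f. (e, f) \<in> semilattice_less E p \<Longrightarrow> y \<notin> T closure_of upper f"
proof -
  define D where "D = {f \<in> E. y \<in> T closure_of upper f}"
  have "X \<noteq> {}"
    using y by (metis closure_of_empty empty_iff)
  then obtain c where "c \<in> D"
    using least_value_upper y unfolding D_def by (metis (mono_tags, lifting) mem_Collect_eq)
  then obtain e where "e \<in> D" and maximal: "\<And>f. (e, f) \<in> semilattice_less E p \<Longrightarrow> f \<notin> D"
    using wf_eq_minimal[THEN iffD1, OF wf_semilattice_less(2)[OF semilattice chain_finite],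
        rule_format, OF \<open>c \<in> D\<close>] by blast
  have "y \<notin> T closure_of upper f" if "(e, f) \<in> semilattice_less E p" for f
    using maximal[OF that] that by (simp add: D_def semilattice_less_def)
  moreover have "e \<in> E" "y \<in> T closure_of upper e"
    using \<open>e \<in> D\<close> by (auto simp: D_def)
  ultimately show ?thesis
    using that by blast
qed

lemma closure_of_X_subset: "T closure_of X \<subseteq> X"
proof
  fix y
  assume "y \<in> T closure_of X"
  then obtain e where "e \<in> E" and y_upper: "y \<in> T closure_of upper e"
    and maximal_closure: "\<And>f. (e, f) \<in> semilattice_less E p \<Longrightarrow> y \<notin> T closure_of upper f"
    using maximal_upper_in_closure by blast
  have inner: "eventually (\<lambda>x'. h (m x' x) = e) (nhdsin_within T y (upper e))"
    if "x \<in> upper e" for x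
  proof -
    have "x \<in> X" "p e (h x) = e"
      using that by (auto simp: upper_def)
    then have "eventually (\<lambda>x'. p (h x') (h x) = e) (nhdsin_within T y (upper e))"
      by (intro eventually_meet_eq_maximal[OF y_upper \<open>e \<in> E\<close> maximal_closure]) auto
    then have "eventually (\<lambda>x'. x' \<in> upper e \<and> p (h x') (h x) = e)
                 (nhdsin_within T y (upper e))"
      using eventually_conj[OF eventually_in_upper] by blast
    then show ?thesis
      by (rule eventually_mono) (use \<open>x \<in> X\<close> in \<open>auto simp: upper_def h_mult\<close>)
  qed
  have "eventually (\<lambda>x. eventually (\<lambda>x'. h (m x' x) = e)
          (nhdsin_within T y (upper e))) (nhdsin_within T y (upper e))"
    using eventually_in_upper by (rule eventually_mono) (rule inner)
  then have "eventually (\<lambda>x. h (m x x) = e) (nhdsin_within T y (upper e))"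
    using eventually_fibre_diagonal[where f = m, OF \<open>e \<in> E\<close> continuous_map_mult mult_closed
        y_upper upper_subset] by blast
  then have "eventually (\<lambda>x. x \<in> upper e \<and> h (m x x) = e) (nhdsin_within T y (upper e))"
    using eventually_conj[OF eventually_in_upper] by blast
  then have "eventually (\<lambda>x. x \<in> fibre e) (nhdsin_within T y (upper e))"
    by (rule eventually_mono) (auto simp: fibre_def upper_def h_square)
  then have "y \<in> T closure_of fibre e"
    by (rule in_closure_of_if_eventually_in[OF y_upper])
  then show "y \<in> X"
    using fibre_closure[OF \<open>e \<in> E\<close>] by (auto simp: fibre_def)
qed

end

theorem lemma4p1:
  fixes T :: "'a topology" and m :: "'a \<Rightarrow> 'a \<Rightarrow> 'a"
    and X :: "'a set" and E :: "'b set" and p :: "'b \<Rightarrow> 'b \<Rightarrow> 'b" and h :: "'a \<Rightarrow> 'b"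
  assumes "topological_semigroup T m"
    and "subsemigroup X (topspace T) m"
    and "semilattice_on E p"
    and "chain_finite E p"
    and "semigroup_hom h X m E p"
    and "continuous_map (subtopology T X) (discrete_topology E) h"
    and "\<forall>e\<in>E. closedin T {x \<in> X. h x = e}"
  shows "closedin T X"
proof -
  interpret fibred_subsemigroup T m X E p h
    using assms by unfold_locales
  show ?thesis
    using closure_of_subset_eq closure_of_X_subset X_subset by blast
qed

end
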